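(* For every positive integer $n$, we have $n \le N_{3n}(\frac{1}{2}) \le n+1$.
   Context: For a positive integer $m$, let $\mathcal{P}_m$ denote the family of all sets of $m$ points in the Euclidean plane such that the distance between any two points of the set is at most $1$. For $0 < r \le 1$, let $N_m(r)$ be the largest integer $k$ such that for every $P \in \mathcal{P}_m$ there exists a circle of radius $r$ (i.e. a closed disc of radius $r$) which covers (contains) at least $k$ points of $P$. *)

theory Defs
  imports "HOL-Analysis.Analysis"
begin

text \<open>Points of the Euclidean plane are modelled as complex numbers (with the
Euclidean distance). \<open>point_sets m\<close> is the family of all sets of exactly
\<open>m\<close> points in the plane in which any two points have distance at most 1.\<close>

definition point_sets :: "nat \<Rightarrow> complex set set" where
  "point_sets m = {P. finite P \<and> card P = m \<and> (\<forall>x\<in>P. \<forall>y\<in>P. dist x y \<le> 1)}"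

definition N :: "nat \<Rightarrow> real \<Rightarrow> nat" where
  "N m r = (GREATEST k. \<forall>P \<in> point_sets m. \<exists>c. card (P \<inter> cball c r) \<ge> k)"

end

theory Submission
  imports Defs
begin

text \<open>
  Lower bound: by Jung's theorem in the plane (the three-point case is a circumradius estimate,
  the general case follows by Helly's theorem) a set of diameter at most 1 lies in a disc of
  radius \<open>1/sqrt 3\<close>. Three discs of radius 1/2, centred at distance \<open>1/(2 sqrt 3)\<close> from its
  centre in directions 120 degrees apart, cover this disc, so one of them contains at least \<open>n\<close>
  of the \<open>3n\<close> points.

  Upper bound: start from a unit equilateral triangle \<open>ABC\<close> and repeatedly add three points,
  one very close to each vertex, each on the unit circle about the next vertex and on the arc
  towards the remaining one, so that the diameter stays 1. A disc of radius 1/2 containing two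
  consecutive new points is centred close to the midpoint of a side; as there are only finitely
  many old points, its old points all lie in the disc of radius 1/2 about that midpoint, and it
  misses an endpoint of the side, because a disc of radius 1/2 through two points at distance 1
  is centred at their midpoint. No such disc contains all three new points, so every step adds
  three points and raises the largest count in a disc of radius 1/2 by at most one.
\<close>

lemma dist_midpoint_sq:
  fixes c x y :: "'a::real_inner"
  shows "(dist c (midpoint x y))\<^sup>2 = ((dist c x)\<^sup>2 + (dist c y)\<^sup>2) / 2 - (dist x y)\<^sup>2 / 4"
  unfolding dist_norm power2_norm_eq_inner midpoint_def
  by (simp add: inner_add_left inner_add_right inner_diff_left inner_diff_right inner_commute field_simps)

lemma dist_midpoints_le:
  fixes a b x y :: "'a::real_normed_vector"
  shows "dist (midpoint x y) (midpoint a b) \<le> (dist x a + dist y b) / 2"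
proof -
  have "midpoint x y - midpoint a b = (1/2) *\<^sub>R ((x - a) + (y - b))"
    by (simp add: midpoint_def algebra_simps)
  then show ?thesis
    using norm_triangle_ineq[of "x - a" "y - b"] by (simp add: dist_norm)
qed

lemma dist_midpoints_shared:
  fixes a b c :: "'a::real_normed_vector"
  shows "dist (midpoint a b) (midpoint b c) = dist a c / 2"
proof -
  have "midpoint a b - midpoint b c = (1/2) *\<^sub>R (a - c)"
    by (simp add: midpoint_def algebra_simps)
  then show ?thesis by (simp add: dist_norm)
qed

lemma half_disc_center_eq_midpoint:
  fixes p q c :: "'a::real_inner"
  assumes "dist p q = 1" "dist c p \<le> 1/2" "dist c q \<le> 1/2"
  shows "c = midpoint p q"
proof -
  have "(dist c p)\<^sup>2 \<le> (1/2)\<^sup>2" "(dist c q)\<^sup>2 \<le> (1/2)\<^sup>2"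
    using assms(2,3) by (simp_all add: power_mono)
  then have "(dist c (midpoint p q))\<^sup>2 \<le> 0"
    unfolding dist_midpoint_sq assms(1) by (simp add: power_divide)
  then show ?thesis by simp
qed

lemma dist_center_midpoint_le:
  fixes A B x y c :: "'a::real_inner" and d :: real
  assumes AB: "dist A B = 1" and d: "0 \<le> d" "d\<^sup>2 \<le> 1/2"
    and x: "dist x A \<le> d\<^sup>2" and y: "dist y B \<le> d\<^sup>2"
    and c: "dist c x \<le> 1/2" "dist c y \<le> 1/2"
  shows "dist c (midpoint A B) \<le> d + d\<^sup>2"
proof -
  have "1 - 2 * d\<^sup>2 \<le> dist x y"
    using dist_triangle[of A B x] dist_triangle[of x B y] AB x y by (simp add: dist_commute)
  then have "(1 - 2 * d\<^sup>2)\<^sup>2 \<le> (dist x y)\<^sup>2"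
    using d(2) by (simp add: power_mono)
  moreover have "(dist c x)\<^sup>2 \<le> 1/4" "(dist c y)\<^sup>2 \<le> 1/4"
    using power_mono[OF c(1), of 2] power_mono[OF c(2), of 2] by (simp_all add: power_divide)
  moreover have "(1 - 2 * d\<^sup>2)\<^sup>2 = 1 - 4 * d\<^sup>2 + 4 * (d\<^sup>2 * d\<^sup>2)"
    by (simp add: power2_eq_square algebra_simps)
  ultimately have "(dist c (midpoint x y))\<^sup>2 \<le> d\<^sup>2 - d\<^sup>2 * d\<^sup>2"
    unfolding dist_midpoint_sq by argo
  then have "(dist c (midpoint x y))\<^sup>2 \<le> d\<^sup>2"
    using zero_le_power2[of "d\<^sup>2"] unfolding power2_eq_square[of "d\<^sup>2"] by linarith
  then have "dist c (midpoint x y) \<le> d"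
    using d(1) power2_le_imp_le by blast
  moreover have "dist (midpoint x y) (midpoint A B) \<le> d\<^sup>2"
    using dist_midpoints_le[of x y A B] x y by argo
  ultimately show ?thesis
    using dist_triangle[of c "midpoint A B" "midpoint x y"] by linarith
qed

lemma dist_midpoint_le_if_obtuse:
  fixes x y z :: "'a::real_inner"
  assumes "inner (x - z) (y - z) \<le> 0"
  shows "dist z (midpoint x y) \<le> dist x y / 2"
proof -
  have "(dist x y)\<^sup>2 = (dist z x)\<^sup>2 + (dist z y)\<^sup>2 - 2 * inner (x - z) (y - z)"
    using dot_norm_neg[of "x - z" "y - z"] by (simp add: dist_norm norm_minus_commute)
  then have "(dist z (midpoint x y))\<^sup>2 \<le> (dist x y)\<^sup>2 / 4"
    using assms unfolding dist_midpoint_sq by argo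
  then have "(dist z (midpoint x y))\<^sup>2 \<le> (dist x y / 2)\<^sup>2"
    by (simp add: power_divide)
  then show ?thesis
    using power2_le_imp_le by fastforce
qed

lemma dist_le_one_iff_inner:
  fixes w a :: "'a::real_inner"
  assumes "norm a = 1"
  shows "dist w a \<le> 1 \<longleftrightarrow> inner w w \<le> 2 * inner w a"
proof -
  have "(dist w a)\<^sup>2 = inner w w - 2 * inner w a + 1"
    using assms unfolding dist_norm power2_norm_eq_inner norm_eq_1
    by (simp add: inner_diff_left inner_diff_right inner_commute)
  moreover have "dist w a \<le> 1 \<longleftrightarrow> (dist w a)\<^sup>2 \<le> 1"
    by (simp add: power_le_one_iff)
  ultimately show ?thesis by linarith
qed

text \<open>For \<open>t \<ge> 0\<close> the point \<open>sgn (a + t *\<^sub>R b)\<close> runs along the unit-circle arc from \<open>a\<close>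
  towards \<open>b\<close>; the lens cut out by the unit balls about \<open>a\<close> and \<open>b\<close> lies in the unit ball about
  each point of that arc.\<close>

lemma dist_sgn_add_le_one:
  fixes a b w :: "'a::real_inner"
  assumes a: "norm a = 1" and b: "norm b = 1" and t: "0 \<le> t" and v: "a + t *\<^sub>R b \<noteq> 0"
    and wa: "dist w a \<le> 1" and wb: "dist w b \<le> 1"
  shows "dist w (sgn (a + t *\<^sub>R b)) \<le> 1"
proof -
  define v where "v = a + t *\<^sub>R b"
  have "inner w w \<le> 2 * inner w a" "t * inner w w \<le> t * (2 * inner w b)"
    using wa wb t mult_left_mono unfolding dist_le_one_iff_inner[OF a] dist_le_one_iff_inner[OF b]
    by auto
  then have "(1 + t) * inner w w \<le> 2 * inner w v"
    unfolding v_def by (simp add: algebra_simps)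
  moreover have "norm v \<le> 1 + t"
    using norm_triangle_ineq[of a "t *\<^sub>R b"] a b t unfolding v_def by simp
  ultimately have "norm v * inner w w \<le> 2 * inner w v"
    by (meson inner_ge_zero mult_right_mono order_trans)
  moreover have "inner w v = norm v * inner w (sgn v)"
    using v unfolding v_def by (simp add: sgn_div_norm)
  ultimately have "norm v * inner w w \<le> norm v * (2 * inner w (sgn v))"
    by (simp add: algebra_simps)
  then have "inner w w \<le> 2 * inner w (sgn v)"
    using v unfolding v_def by simp
  then show ?thesis
    using dist_le_one_iff_inner[of "sgn v" w] v unfolding v_def by (simp add: norm_sgn)
qed

lemma dist_sgn_add_self_le:
  fixes a b :: "'a::real_normed_vector"
  assumes a: "norm a = 1" and b: "norm b = 1" and t: "0 \<le> t" "t \<le> 1/2"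
  shows "dist (sgn (a + t *\<^sub>R b)) a \<le> 4 * t"
proof -
  define v where "v = a + t *\<^sub>R b"
  have "\<bar>norm v - 1\<bar> \<le> t"
    using norm_triangle_ineq[of a "t *\<^sub>R b"] norm_triangle_ineq4[of v "t *\<^sub>R b"] a b t
    unfolding v_def by auto
  then have v: "\<bar>1 - norm v\<bar> \<le> t" "1/2 \<le> norm v" "v \<noteq> 0"
    using t by auto
  have "sgn v - a = (1 / norm v) *\<^sub>R (v - norm v *\<^sub>R a)"
    using v(3) by (simp add: sgn_div_norm inverse_eq_divide algebra_simps)
  also have "v - norm v *\<^sub>R a = (1 - norm v) *\<^sub>R a + t *\<^sub>R b"
    unfolding v_def by (simp add: algebra_simps)
  finally have "sgn v - a = (1 / norm v) *\<^sub>R ((1 - norm v) *\<^sub>R a + t *\<^sub>R b)" .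
  moreover have "norm ((1 - norm v) *\<^sub>R a + t *\<^sub>R b) \<le> 2 * t"
    using norm_triangle_ineq[of "(1 - norm v) *\<^sub>R a" "t *\<^sub>R b"] a b v t by simp
  ultimately have "dist (sgn v) a \<le> 2 * t / norm v"
    using v by (simp add: dist_norm divide_right_mono)
  also have "\<dots> \<le> 4 * t"
  proof -
    have "2 * t \<le> (4 * t) * norm v"
      using mult_left_mono[OF v(2), of "4 * t"] t by simp
    then show ?thesis
      using v(3) by (simp add: pos_divide_le_eq)
  qed
  finally show ?thesis
    unfolding v_def .
qed

lemma sgn_add_scaleR_neq:
  fixes a b :: "'a::real_inner"
  assumes a: "norm a = 1" and b: "norm b = 1" and ab: "inner a b = 1/2" and t: "0 < t"
  shows "sgn (a + t *\<^sub>R b) \<noteq> a"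
proof
  define v where "v = a + t *\<^sub>R b"
  assume "sgn (a + t *\<^sub>R b) = a"
  moreover have "inner a v = 1 + t / 2"
    using a ab unfolding v_def norm_eq_1 by (simp add: inner_add_right)
  then have "v \<noteq> 0"
    using t by auto
  then have "v = norm v *\<^sub>R sgn v"
    by (simp add: sgn_div_norm)
  ultimately have "t *\<^sub>R b = (norm v - 1) *\<^sub>R a"
    unfolding v_def by (simp add: algebra_simps)
  then have "inner a (t *\<^sub>R b) = inner a ((norm v - 1) *\<^sub>R a)"
    "inner b (t *\<^sub>R b) = inner b ((norm v - 1) *\<^sub>R a)"
    by simp_all
  then have "t * inner a b = norm v - 1" "t = (norm v - 1) * inner a b"
    using a b unfolding norm_eq_1 by (simp_all add: inner_commute)
  then show False
    using ab t by simp
qed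

lemma arc_point_exists:
  fixes A B C :: "'a::real_inner"
  assumes AB: "dist A B = 1" and BC: "dist B C = 1" and AC: "dist A C = 1" and e: "0 < e"
  obtains x where "dist x B = 1" "x \<noteq> A" "dist x A \<le> e"
    "\<And>p. dist p A \<le> 1 \<Longrightarrow> dist p C \<le> 1 \<Longrightarrow> dist p x \<le> 1"
proof -
  define a b where "a = A - B" and "b = C - B"
  define t where "t = min (1/2) (e/4)"
  have t: "0 < t" "t \<le> 1/2" "4 * t \<le> e"
    using e unfolding t_def by auto
  have a: "norm a = 1" and b: "norm b = 1"
    using AB BC unfolding a_def b_def by (simp_all add: dist_norm norm_minus_commute)
  have ab: "inner a b = 1/2"
    using AC a b unfolding dot_norm_neg a_def b_def by (simp add: dist_norm)
  have "inner a (a + t *\<^sub>R b) = 1 + t / 2"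
    using a ab unfolding norm_eq_1 by (simp add: inner_add_right)
  then have v: "a + t *\<^sub>R b \<noteq> 0"
    using t by auto
  define x where "x = B + sgn (a + t *\<^sub>R b)"
  have xA: "dist x A = dist (sgn (a + t *\<^sub>R b)) a"
    unfolding x_def a_def dist_norm by (simp add: algebra_simps)
  have "dist x B = 1"
    unfolding x_def dist_norm using v by (simp add: norm_sgn)
  moreover have "x \<noteq> A"
    using sgn_add_scaleR_neq[OF a b ab t(1)] unfolding x_def a_def by (auto simp: algebra_simps)
  moreover have "dist x A \<le> e"
    using dist_sgn_add_self_le[OF a b _ t(2)] t unfolding xA by simp
  moreover have "dist p x \<le> 1" if "dist p A \<le> 1" "dist p C \<le> 1" for p
  proof -
    have "dist (p - B) a \<le> 1" "dist (p - B) b \<le> 1"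
      using that unfolding a_def b_def by (simp_all add: dist_norm)
    then have "dist (p - B) (sgn (a + t *\<^sub>R b)) \<le> 1"
      using dist_sgn_add_le_one[OF a b _ v] t by simp
    then show ?thesis
      unfolding x_def by (simp add: dist_norm algebra_simps)
  qed
  ultimately show ?thesis
    using that by blast
qed

section \<open>The upper bound: perturbing an equilateral triangle\<close>

lemma finite_cball_gap:
  fixes P M :: "'a::metric_space set"
  assumes "finite P" "finite M"
  obtains \<epsilon> where "0 < \<epsilon>" "\<And>m. m \<in> M \<Longrightarrow> P \<inter> cball m (r + \<epsilon>) \<subseteq> cball m r"
proof -
  define X where "X = (\<lambda>(p, m). dist m p) ` (P \<times> M)"
  have "finite X"
    using assms unfolding X_def by simp
  then obtain \<delta> where \<delta>: "0 < \<delta>" "\<forall>x\<in>X. x \<noteq> r \<longrightarrow> \<delta> \<le> dist r x"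
    using finite_set_avoid by blast
  show ?thesis
  proof
    show "0 < \<delta> / 2"
      using \<delta>(1) by simp
    fix m assume m: "m \<in> M"
    show "P \<inter> cball m (r + \<delta> / 2) \<subseteq> cball m r"
    proof
      fix p assume p: "p \<in> P \<inter> cball m (r + \<delta> / 2)"
      then have "dist m p \<in> X"
        using m unfolding X_def by auto
      then have "dist m p = r \<or> \<delta> \<le> \<bar>r - dist m p\<bar>"
        using \<delta>(2) unfolding dist_real_def by blast
      then show "p \<in> cball m r"
        using p \<delta>(1) by auto
    qed
  qed
qed

lemma card_Int_triple_le_2:
  assumes "\<not> {a, b, c} \<subseteq> D"
  shows "card ({a, b, c} \<inter> D) \<le> 2"
proof -
  obtain z where z: "z \<in> {a, b, c}" "z \<notin> D"
    using assms by blast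
  have "card ({a, b, c} \<inter> D) \<le> card ({a, b, c} - {z})"
    using z by (intro card_mono) auto
  also have "\<dots> = card {a, b, c} - 1"
    using z(1) by simp
  also have "\<dots> \<le> 2"
    using card_insert_le_m1[of 3 "{b, c}" a] card_insert_le_m1[of 2 "{c}" b] by simp
  finally show ?thesis .
qed

lemma card_Int_triple_le_1:
  assumes "\<not> (a \<in> D \<and> b \<in> D)" "\<not> (b \<in> D \<and> c \<in> D)" "\<not> (c \<in> D \<and> a \<in> D)"
  shows "card ({a, b, c} \<inter> D) \<le> 1"
  unfolding One_nat_def using assms by (subst card_le_Suc0_iff_eq) auto

lemma card_half_disc_through_perturbed_pair:
  fixes P :: "'a::real_inner set" and d :: real
  assumes P: "finite P" "A \<in> P" "B \<in> P" and AB: "dist A B = 1"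
    and bound: "card (P \<inter> cball (midpoint A B) (1/2)) \<le> k + 1"
    and gap: "P \<inter> cball (midpoint A B) (1/2 + (d + d\<^sup>2)) \<subseteq> cball (midpoint A B) (1/2)"
    and d: "0 \<le> d" "d\<^sup>2 \<le> 1/2"
    and x: "dist x B = 1" "x \<noteq> A" "dist x A \<le> d\<^sup>2" and y: "dist y B \<le> d\<^sup>2"
    and c: "dist c x \<le> 1/2" "dist c y \<le> 1/2"
  shows "card (P \<inter> cball c (1/2)) \<le> k"
proof -
  define M where "M = midpoint A B"
  have "dist c M \<le> d + d\<^sup>2"
    unfolding M_def using dist_center_midpoint_le[OF AB d x(3) y c] .
  have "P \<inter> cball c (1/2) \<subseteq> P \<inter> cball M (1/2 + (d + d\<^sup>2))"
  proof
    fix p assume p: "p \<in> P \<inter> cball c (1/2)"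
    have "dist M p \<le> dist M c + dist c p"
      by (rule dist_triangle)
    then show "p \<in> P \<inter> cball M (1/2 + (d + d\<^sup>2))"
      using p \<open>dist c M \<le> d + d\<^sup>2\<close> by (simp add: dist_commute)
  qed
  then have sub: "P \<inter> cball c (1/2) \<subseteq> P \<inter> cball M (1/2)"
    using gap unfolding M_def by blast
  have "\<not> {A, B} \<subseteq> cball c (1/2)"
  proof
    assume "{A, B} \<subseteq> cball c (1/2)"
    then have "c = midpoint A B" "dist c B \<le> 1/2"
      using half_disc_center_eq_midpoint[OF AB] by auto
    moreover have "c = midpoint x B"
      using half_disc_center_eq_midpoint[OF x(1) c(1)] calculation(2) .
    ultimately show False
      using x(2) by (simp add: midpoint_eq_iff)
  qed
  moreover have "A \<in> P \<inter> cball M (1/2)" "B \<in> P \<inter> cball M (1/2)"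
    using P AB unfolding M_def by (simp_all add: dist_midpoint)
  ultimately obtain z where z: "z \<in> P \<inter> cball M (1/2)" "z \<notin> cball c (1/2)"
    by blast
  then have "P \<inter> cball c (1/2) \<subseteq> P \<inter> cball M (1/2) - {z}"
    using sub by blast
  then have "card (P \<inter> cball c (1/2)) \<le> card (P \<inter> cball M (1/2)) - 1"
    using z P(1) by (metis card_Diff_singleton card_mono finite_Diff finite_Int)
  then show ?thesis using bound unfolding M_def by linarith
qed

lemma perturbed_triangle_not_subset_half_disc:
  fixes A B C xA xB xC c :: "'a::real_inner" and d :: real
  assumes ABC: "dist A B = 1" "dist B C = 1" "dist C A = 1" and d: "0 \<le> d" "d + d\<^sup>2 < 1/4"
    and x: "dist xA A \<le> d\<^sup>2" "dist xB B \<le> d\<^sup>2" "dist xC C \<le> d\<^sup>2"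
  shows "\<not> {xA, xB, xC} \<subseteq> cball c (1/2)"
proof
  assume "{xA, xB, xC} \<subseteq> cball c (1/2)"
  moreover have "d\<^sup>2 \<le> 1/2"
    using d by linarith
  ultimately have "dist c (midpoint A B) \<le> d + d\<^sup>2" "dist c (midpoint B C) \<le> d + d\<^sup>2"
    using dist_center_midpoint_le[OF ABC(1) d(1) _ x(1,2)] dist_center_midpoint_le[OF ABC(2) d(1) _ x(2,3)]
    by simp_all
  moreover have "dist (midpoint A B) (midpoint B C) = 1/2"
    using ABC(3) by (simp add: dist_midpoints_shared dist_commute)
  ultimately show False
    using dist_triangle3[of "midpoint A B" "midpoint B C" c] d(2) by linarith
qed

lemma card_half_disc_extension_le:
  fixes P :: "'a::real_inner set" and d :: real
  assumes P: "finite P" "A \<in> P" "B \<in> P" "C \<in> P"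
    and ABC: "dist A B = 1" "dist B C = 1" "dist C A = 1"
    and disc: "\<And>c. card (P \<inter> cball c (1/2)) \<le> k + 1"
    and gap: "\<And>m. m \<in> {midpoint A B, midpoint B C, midpoint C A} \<Longrightarrow>
      P \<inter> cball m (1/2 + (d + d\<^sup>2)) \<subseteq> cball m (1/2)"
    and d: "0 \<le> d" "d + d\<^sup>2 < 1/4"
    and xA: "dist xA B = 1" "xA \<noteq> A" "dist xA A \<le> d\<^sup>2"
    and xB: "dist xB C = 1" "xB \<noteq> B" "dist xB B \<le> d\<^sup>2"
    and xC: "dist xC A = 1" "xC \<noteq> C" "dist xC C \<le> d\<^sup>2"
  shows "card (({xA, xB, xC} \<union> P) \<inter> cball c (1/2)) \<le> k + 2"
proof -
  let ?D = "cball c (1/2)"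
  have d2: "d\<^sup>2 \<le> 1/2"
    using d by linarith
  have card_union: "card (({xA, xB, xC} \<union> P) \<inter> ?D) \<le> card ({xA, xB, xC} \<inter> ?D) + card (P \<inter> ?D)"
    by (metis Int_Un_distrib2 card_Un_le)
  show ?thesis
  proof (cases "{xA, xB} \<subseteq> ?D \<or> {xB, xC} \<subseteq> ?D \<or> {xC, xA} \<subseteq> ?D")
    case True
    then have "card (P \<inter> ?D) \<le> k"
    proof (elim disjE)
      assume "{xA, xB} \<subseteq> ?D"
      then show ?thesis
        using card_half_disc_through_perturbed_pair[OF P(1,2,3) ABC(1) disc gap d(1) d2 xA xB(3)]
        by simp
    next
      assume "{xB, xC} \<subseteq> ?D"
      then show ?thesis
        using card_half_disc_through_perturbed_pair[OF P(1,3,4) ABC(2) disc gap d(1) d2 xB xC(3)]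
        by simp
    next
      assume "{xC, xA} \<subseteq> ?D"
      then show ?thesis
        using card_half_disc_through_perturbed_pair[OF P(1,4,2) ABC(3) disc gap d(1) d2 xC xA(3)]
        by simp
    qed
    then show ?thesis
      using card_union card_Int_triple_le_2[OF perturbed_triangle_not_subset_half_disc[OF ABC d
          xA(3) xB(3) xC(3), of c]] by linarith
  next
    case False
    then have "card ({xA, xB, xC} \<inter> ?D) \<le> 1"
      by (intro card_Int_triple_le_1) auto
    then show ?thesis
      using card_union disc[of c] by linarith
  qed
qed

lemma perturbed_triangle_exists:
  fixes A B C :: "'a::real_inner"
  assumes ABC: "dist A B = 1" "dist B C = 1" "dist C A = 1" and e: "0 < e" "e \<le> 1"
  obtains xA xB xC where
    "dist xA B = 1" "xA \<noteq> A" "dist xA A \<le> e"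
    "dist xB C = 1" "xB \<noteq> B" "dist xB B \<le> e"
    "dist xC A = 1" "xC \<noteq> C" "dist xC C \<le> e"
    "\<And>x. x \<in> {xA, xB, xC} \<Longrightarrow> {A, B, C} \<subseteq> cball x 1"
    "\<And>p. {A, B, C} \<subseteq> cball p 1 \<Longrightarrow> {xA, xB, xC} \<subseteq> cball p 1"
proof -
  have CBA: "dist A C = 1" "dist C B = 1" "dist B A = 1"
    using ABC by (simp_all add: dist_commute)
  obtain xA where xA: "dist xA B = 1" "xA \<noteq> A" "dist xA A \<le> e"
    and lensA: "\<And>p. dist p A \<le> 1 \<Longrightarrow> dist p C \<le> 1 \<Longrightarrow> dist p xA \<le> 1"
    by (rule arc_point_exists[OF ABC(1,2) CBA(1) e(1)]) blast
  obtain xB where xB: "dist xB C = 1" "xB \<noteq> B" "dist xB B \<le> e"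
    and lensB: "\<And>p. dist p B \<le> 1 \<Longrightarrow> dist p A \<le> 1 \<Longrightarrow> dist p xB \<le> 1"
    by (rule arc_point_exists[OF ABC(2,3) CBA(3) e(1)]) blast
  obtain xC where xC: "dist xC A = 1" "xC \<noteq> C" "dist xC C \<le> e"
    and lensC: "\<And>p. dist p C \<le> 1 \<Longrightarrow> dist p B \<le> 1 \<Longrightarrow> dist p xC \<le> 1"
    by (rule arc_point_exists[OF ABC(3,1) CBA(2) e(1)]) blast
  have lens: "{xA, xB, xC} \<subseteq> cball p 1" if "{A, B, C} \<subseteq> cball p 1" for p
    using that lensA lensB lensC by simp
  have "dist C xA \<le> 1" "dist A xB \<le> 1" "dist B xC \<le> 1"
    using lensA[of C] lensB[of A] lensC[of B] ABC CBA by simp_all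
  then have close: "{A, B, C} \<subseteq> cball x 1" if "x \<in> {xA, xB, xC}" for x
    using that xA xB xC e(2) by (auto simp: dist_commute)
  show ?thesis
    by (rule that[OF xA xB xC close lens])
qed

definition sparse_configuration :: "nat \<Rightarrow> 'a::real_inner set \<Rightarrow> bool" where
  "sparse_configuration k P \<longleftrightarrow> finite P \<and> card P = 3 * k \<and> (\<forall>p\<in>P. \<forall>q\<in>P. dist p q \<le> 1) \<and>
     (\<exists>A\<in>P. \<exists>B\<in>P. \<exists>C\<in>P. dist A B = 1 \<and> dist B C = 1 \<and> dist C A = 1) \<and>
     (\<forall>c. card (P \<inter> cball c (1/2)) \<le> k + 1)"

lemma sparse_configuration_triangle:
  fixes A B C :: "'a::real_inner"
  assumes ABC: "dist A B = 1" "dist B C = 1" "dist C A = 1"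
  shows "sparse_configuration 1 {A, B, C}"
proof -
  have "A \<noteq> B" "B \<noteq> C" "C \<noteq> A"
    using ABC by auto
  then have "card {A, B, C} = 3"
    by simp
  moreover have "\<forall>p\<in>{A, B, C}. \<forall>q\<in>{A, B, C}. dist p q \<le> 1"
    using ABC by (auto simp: dist_commute)
  moreover have "card ({A, B, C} \<inter> cball c (1/2)) \<le> 2" for c
    using card_Int_triple_le_2[OF perturbed_triangle_not_subset_half_disc[OF ABC, of 0]] by simp
  moreover have "\<exists>A'\<in>{A, B, C}. \<exists>B'\<in>{A, B, C}. \<exists>C'\<in>{A, B, C}.
      dist A' B' = 1 \<and> dist B' C' = 1 \<and> dist C' A' = 1"
    using ABC by blast
  moreover have "finite {A, B, C}"
    by simp
  ultimately show ?thesis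
    unfolding sparse_configuration_def one_add_one mult_1_right by blast
qed

lemma perturbation_radius_exists:
  fixes P M S :: "'a::metric_space set"
  assumes "finite P" "finite M" "finite S"
  obtains d where "0 < d" "d \<le> 1/8"
    "\<And>m. m \<in> M \<Longrightarrow> P \<inter> cball m (1/2 + (d + d\<^sup>2)) \<subseteq> cball m (1/2)"
    "\<And>s. s \<in> S \<Longrightarrow> P \<inter> cball s (d\<^sup>2) \<subseteq> {s}"
proof -
  obtain \<epsilon> where \<epsilon>: "0 < \<epsilon>" "\<And>m. m \<in> M \<Longrightarrow> P \<inter> cball m (1/2 + \<epsilon>) \<subseteq> cball m (1/2)"
    using finite_cball_gap[OF assms(1,2)] by blast
  obtain \<eta> where \<eta>: "0 < \<eta>" "\<And>s. s \<in> S \<Longrightarrow> P \<inter> cball s (0 + \<eta>) \<subseteq> cball s 0"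
    using finite_cball_gap[OF assms(1,3)] by blast
  define d where "d = min (1/8) (min (\<epsilon>/2) \<eta>)"
  have d: "0 < d" "d \<le> 1/8" "d \<le> \<epsilon>/2" "d \<le> \<eta>"
    using \<epsilon>(1) \<eta>(1) unfolding d_def by auto
  then have d2: "d\<^sup>2 \<le> d/8"
    by (simp add: power2_eq_square mult_left_mono)
  show ?thesis
  proof (rule that)
    show "0 < d" "d \<le> 1/8"
      using d by simp_all
  next
    fix m assume "m \<in> M"
    moreover have "cball m (1/2 + (d + d\<^sup>2)) \<subseteq> cball m (1/2 + \<epsilon>)"
      using d d2 by (intro subset_cball) linarith
    ultimately show "P \<inter> cball m (1/2 + (d + d\<^sup>2)) \<subseteq> cball m (1/2)"
      using \<epsilon>(2) by blast
  next
    fix s assume "s \<in> S"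
    moreover have "cball s (d\<^sup>2) \<subseteq> cball s (0 + \<eta>)"
      using d d2 by (intro subset_cball) linarith
    ultimately show "P \<inter> cball s (d\<^sup>2) \<subseteq> {s}"
      using \<eta>(2) by fastforce
  qed
qed

lemma dist_le_one_extension:
  fixes P X T :: "'a::metric_space set"
  assumes diam: "\<forall>p\<in>P. \<forall>q\<in>P. dist p q \<le> 1" and T: "T \<subseteq> P"
    and close: "\<And>x. x \<in> X \<Longrightarrow> T \<subseteq> cball x 1"
    and lens: "\<And>p. T \<subseteq> cball p 1 \<Longrightarrow> X \<subseteq> cball p 1"
  shows "\<forall>p\<in>X \<union> P. \<forall>q\<in>X \<union> P. dist p q \<le> 1"
proof (intro ballI)
  have near_T: "T \<subseteq> cball p 1" if "p \<in> X \<union> P" for p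
    using that close diam T by fastforce
  fix p q assume "p \<in> X \<union> P" "q \<in> X \<union> P"
  then consider "p \<in> P" "q \<in> P" | "q \<in> X" | "p \<in> X"
    by blast
  then show "dist p q \<le> 1"
  proof cases
    case 1
    then show ?thesis using diam by blast
  next
    case 2
    then show ?thesis using lens[OF near_T[OF \<open>p \<in> X \<union> P\<close>]] by auto
  next
    case 3
    then show ?thesis using lens[OF near_T[OF \<open>q \<in> X \<union> P\<close>]] by (auto simp: dist_commute)
  qed
qed

lemma sparse_configuration_Suc:
  fixes P :: "'a::real_inner set"
  assumes "sparse_configuration k P"
  shows "\<exists>P' :: 'a set. sparse_configuration (Suc k) P'"
proof -
  obtain A B C where P: "finite P" "card P = 3 * k" "\<forall>p\<in>P. \<forall>q\<in>P. dist p q \<le> 1"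
    and ABC_P: "A \<in> P" "B \<in> P" "C \<in> P" and ABC: "dist A B = 1" "dist B C = 1" "dist C A = 1"
    and disc: "\<And>c. card (P \<inter> cball c (1/2)) \<le> k + 1"
    using assms unfolding sparse_configuration_def by blast
  have fin: "finite {midpoint A B, midpoint B C, midpoint C A}" "finite {A, B, C}"
    by simp_all
  obtain d where d: "0 < d" "d \<le> 1/8"
    and gap: "\<And>m. m \<in> {midpoint A B, midpoint B C, midpoint C A} \<Longrightarrow>
      P \<inter> cball m (1/2 + (d + d\<^sup>2)) \<subseteq> cball m (1/2)"
    and sep: "\<And>s. s \<in> {A, B, C} \<Longrightarrow> P \<inter> cball s (d\<^sup>2) \<subseteq> {s}"
    by (rule perturbation_radius_exists[OF P(1) fin]) blast
  have d2: "0 < d\<^sup>2" "d\<^sup>2 \<le> 1/64" "d + d\<^sup>2 < 1/4"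
    using d power_mono[OF d(2), of 2] by (simp_all add: power_divide)
  obtain xA xB xC where
    xA: "dist xA B = 1" "xA \<noteq> A" "dist xA A \<le> d\<^sup>2" and
    xB: "dist xB C = 1" "xB \<noteq> B" "dist xB B \<le> d\<^sup>2" and
    xC: "dist xC A = 1" "xC \<noteq> C" "dist xC C \<le> d\<^sup>2" and
    close: "\<And>x. x \<in> {xA, xB, xC} \<Longrightarrow> {A, B, C} \<subseteq> cball x 1" and
    lens: "\<And>p. {A, B, C} \<subseteq> cball p 1 \<Longrightarrow> {xA, xB, xC} \<subseteq> cball p 1"
    by (rule perturbed_triangle_exists[OF ABC d2(1)]) (use d2 in auto)
  have "xA \<notin> P" "xB \<notin> P" "xC \<notin> P"
    using sep[of A] sep[of B] sep[of C] xA xB xC by (auto simp: dist_commute)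
  moreover have "xA \<noteq> xB" "xB \<noteq> xC" "xC \<noteq> xA"
    using xA(1,3) xB(1,3) xC(1,3) d2 by auto
  ultimately have "card ({xA, xB, xC} \<union> P) = 3 * Suc k"
    using P(1,2) by simp
  moreover have "\<forall>p\<in>{xA, xB, xC} \<union> P. \<forall>q\<in>{xA, xB, xC} \<union> P. dist p q \<le> 1"
    using dist_le_one_extension[OF P(3) _ close lens] ABC_P by blast
  moreover have "card (({xA, xB, xC} \<union> P) \<inter> cball c (1/2)) \<le> Suc k + 1" for c
    using card_half_disc_extension_le[OF P(1) ABC_P ABC disc gap _ d2(3) xA xB xC, of c] d by simp
  ultimately have "sparse_configuration (Suc k) ({xA, xB, xC} \<union> P)"
    using P(1) ABC_P ABC unfolding sparse_configuration_def by blast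
  then show ?thesis
    by blast
qed

lemma sparse_configuration_exists:
  assumes "1 \<le> k"
  shows "\<exists>P :: complex set. sparse_configuration k P"
  using assms
proof (induction k rule: dec_induct)
  case base
  have "dist (0::complex) 1 = 1" "dist 1 (Complex (1/2) (sqrt 3 / 2)) = 1"
    "dist (Complex (1/2) (sqrt 3 / 2)) 0 = 1"
    by (simp_all add: dist_norm cmod_def power_divide)
  then show ?case
    using sparse_configuration_triangle by blast
next
  case (step k)
  then show ?case
    using sparse_configuration_Suc by blast
qed

section \<open>The lower bound: Jung's theorem and three discs of radius 1/2\<close>

lemma exists_direction_within_sixty_degrees:
  fixes w :: complex
  shows "\<exists>e\<in>{1, Complex (-1/2) (sqrt 3 / 2), Complex (-1/2) (- sqrt 3 / 2)}. norm w \<le> 2 * inner w e"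
proof -
  define a b where "a = Re w" and "b = Im w"
  have \<rho>: "(norm w)\<^sup>2 = a\<^sup>2 + b\<^sup>2"
    unfolding a_def b_def by (rule cmod_power2)
  show ?thesis
  proof (cases "norm w \<le> 2 * a")
    case True
    then show ?thesis unfolding a_def by simp
  next
    case False
    have "\<bar>a\<bar> \<le> norm w"
      unfolding a_def by (rule abs_Re_le_cmod)
    moreover have "3 * b\<^sup>2 - (norm w + a)\<^sup>2 = (norm w + a) * (2 * norm w - 4 * a)"
      using \<rho> by (simp add: power2_eq_square algebra_simps)
    moreover have "0 \<le> (norm w + a) * (2 * norm w - 4 * a)"
      using False \<open>\<bar>a\<bar> \<le> norm w\<close> by simp
    ultimately have "(norm w + a)\<^sup>2 \<le> (sqrt 3 * \<bar>b\<bar>)\<^sup>2"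
      by (simp add: power_mult_distrib)
    then have "norm w \<le> - a + sqrt 3 * \<bar>b\<bar>"
      using power2_le_imp_le[of "norm w + a" "sqrt 3 * \<bar>b\<bar>"] by simp
    then show ?thesis
      unfolding a_def b_def inner_complex_def by (cases "0 \<le> Im w") (auto simp: mult.commute)
  qed
qed

lemma dist_scaled_direction_le_half:
  fixes w e :: "'a::real_inner"
  assumes e: "norm e = 1" and w: "norm w \<le> r" "norm w \<le> 2 * inner w e" and r: "3 * r\<^sup>2 \<le> 1"
  shows "dist w ((r / 2) *\<^sub>R e) \<le> 1/2"
proof -
  have r0: "0 \<le> r"
    using w(1) norm_ge_zero order_trans by blast
  have "(dist w ((r / 2) *\<^sub>R e))\<^sup>2 = (norm w)\<^sup>2 - r * inner w e + r\<^sup>2 / 4"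
    using e unfolding dist_norm power2_norm_eq_inner norm_eq_1
    by (simp add: inner_diff_left inner_diff_right inner_commute power2_eq_square)
  also have "\<dots> \<le> (norm w)\<^sup>2 - r * norm w / 2 + r\<^sup>2 / 4"
    using mult_left_mono[OF w(2) r0] by simp
  also have "\<dots> \<le> 3 * r\<^sup>2 / 4"
  proof -
    have "(norm w - r) * (norm w + r / 2) \<le> 0"
      using w(1) r0 by (simp add: mult_nonpos_nonneg)
    moreover have "(norm w - r) * (norm w + r / 2) = (norm w)\<^sup>2 - r * norm w / 2 - r\<^sup>2 / 2"
      by (simp add: power2_eq_square field_simps)
    ultimately show ?thesis
      by linarith
  qed
  also have "\<dots> \<le> (1/2)\<^sup>2"
    using r by (simp add: power_divide)
  finally show ?thesis
    using power2_le_imp_le by fastforce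
qed

lemma cball_covered_by_three_half_discs:
  fixes c :: complex
  assumes r: "3 * r\<^sup>2 \<le> 1"
  obtains c1 c2 c3 where "cball c r \<subseteq> cball c1 (1/2) \<union> cball c2 (1/2) \<union> cball c3 (1/2)"
proof -
  define E where "E = {1, Complex (-1/2) (sqrt 3 / 2), Complex (-1/2) (- sqrt 3 / 2)}"
  have "\<exists>e\<in>E. p \<in> cball (c + (r / 2) *\<^sub>R e) (1/2)" if "p \<in> cball c r" for p
  proof -
    have w: "norm (p - c) \<le> r"
      using that by (simp add: dist_norm norm_minus_commute)
    obtain e where e: "e \<in> E" "norm (p - c) \<le> 2 * inner (p - c) e"
      using exists_direction_within_sixty_degrees unfolding E_def by blast
    moreover have "norm e = 1"
      using e(1) unfolding E_def by (auto simp: cmod_def power_divide)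
    ultimately have "dist (p - c) ((r / 2) *\<^sub>R e) \<le> 1/2"
      using dist_scaled_direction_le_half[OF _ w _ r] by blast
    then show ?thesis
      using e(1) by (auto simp: dist_norm algebra_simps norm_minus_commute)
  qed
  then have "cball c r \<subseteq> cball (c + (r / 2) *\<^sub>R 1) (1/2) \<union>
      cball (c + (r / 2) *\<^sub>R Complex (-1/2) (sqrt 3 / 2)) (1/2) \<union>
      cball (c + (r / 2) *\<^sub>R Complex (-1/2) (- sqrt 3 / 2)) (1/2)"
    unfolding E_def by blast
  then show ?thesis
    by (rule that)
qed

lemma circumcenter_exists:
  fixes u v :: complex
  defines "q \<equiv> Re u * Im v - Im u * Re v"
  assumes q: "q \<noteq> 0"
  obtains c where "dist c u = norm c" "dist c v = norm c"
    "4 * q\<^sup>2 * (norm c)\<^sup>2 = (norm u)\<^sup>2 * (norm v)\<^sup>2 * (dist u v)\<^sup>2"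
proof
  define U V where "U = (norm u)\<^sup>2" and "V = (norm v)\<^sup>2"
  define a b where "a = Im v * U - Im u * V" and "b = Re u * V - Re v * U"
  \<comment> \<open>the circumcentre of \<open>0\<close>, \<open>u\<close>, \<open>v\<close>; \<open>q\<close> is twice the signed area of that triangle\<close>
  define c where "c = Complex (a / (2 * q)) (b / (2 * q))"
  have "inner c u = (a * Re u + b * Im u) / (2 * q)" "inner c v = (a * Re v + b * Im v) / (2 * q)"
    unfolding c_def inner_complex_def by (simp_all add: add_divide_distrib)
  moreover have "a * Re u + b * Im u = U * q" "a * Re v + b * Im v = V * q"
    unfolding a_def b_def q_def by (simp_all add: algebra_simps)
  ultimately have "2 * inner c u = U" "2 * inner c v = V"
    using q by simp_all
  moreover have "(dist c w)\<^sup>2 = (norm c)\<^sup>2 - 2 * inner c w + (norm w)\<^sup>2" for w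
    unfolding dist_norm power2_norm_eq_inner by (simp add: inner_diff_left inner_diff_right inner_commute)
  ultimately have "(dist c u)\<^sup>2 = (norm c)\<^sup>2" "(dist c v)\<^sup>2 = (norm c)\<^sup>2"
    unfolding U_def V_def by simp_all
  then show "dist c u = norm c" "dist c v = norm c"
    by simp_all
  have "(norm c)\<^sup>2 = (a\<^sup>2 + b\<^sup>2) / (2 * q)\<^sup>2"
    unfolding c_def cmod_power2 by (simp add: power_divide add_divide_distrib)
  moreover have "a\<^sup>2 + b\<^sup>2 = U * V * (dist u v)\<^sup>2"
    unfolding a_def b_def U_def V_def dist_norm cmod_power2 by (simp add: power2_eq_square algebra_simps)
  ultimately show "4 * q\<^sup>2 * (norm c)\<^sup>2 = (norm u)\<^sup>2 * (norm v)\<^sup>2 * (dist u v)\<^sup>2"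
    using q unfolding U_def V_def by (simp add: power_mult_distrib)
qed

lemma acute_triangle_circumradius_le:
  fixes u v :: complex
  assumes p: "0 < inner u v" and uv: "norm u \<le> dist u v" "norm v \<le> dist u v"
  obtains c where "dist c u = norm c" "dist c v = norm c" "3 * (norm c)\<^sup>2 \<le> (dist u v)\<^sup>2"
proof -
  define q where "q = Re u * Im v - Im u * Re v"
  define U V L where "U = (norm u)\<^sup>2" and "V = (norm v)\<^sup>2" and "L = (dist u v)\<^sup>2"
  have L: "L = U + V - 2 * inner u v"
    unfolding U_def V_def L_def dist_norm power2_norm_eq_inner
    by (simp add: inner_diff_left inner_diff_right inner_commute)
  have "U \<le> L" "V \<le> L"
    using uv unfolding U_def V_def L_def by (simp_all add: power_mono)
  then have "(2 * inner u v) * (2 * inner u v) \<le> U * V"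
    using p L by (intro mult_mono) auto
  then have "4 * (inner u v)\<^sup>2 \<le> U * V"
    by (simp add: power2_eq_square)
  moreover have "U * V = (inner u v)\<^sup>2 + q\<^sup>2"
    unfolding U_def V_def q_def cmod_power2 inner_complex_def by (simp add: power2_eq_square algebra_simps)
  moreover have "0 < (inner u v)\<^sup>2"
    using p by simp
  ultimately have UVq: "3 * (U * V) \<le> 4 * q\<^sup>2" and "0 < q\<^sup>2"
    by linarith+
  then obtain c where c: "dist c u = norm c" "dist c v = norm c" "4 * q\<^sup>2 * (norm c)\<^sup>2 = U * V * L"
    using circumcenter_exists[of u v] unfolding q_def U_def V_def L_def by auto
  have "3 * (4 * q\<^sup>2 * (norm c)\<^sup>2) \<le> 4 * q\<^sup>2 * L"
    unfolding c(3) using mult_right_mono[OF UVq, of L] L_def by simp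
  then have "3 * (norm c)\<^sup>2 \<le> L"
    using \<open>0 < q\<^sup>2\<close> by (simp add: algebra_simps)
  then show ?thesis
    using that c(1,2) unfolding L_def by blast
qed

lemma triangle_in_cball_longest_side:
  fixes x y z :: complex
  assumes "dist x z \<le> dist x y" "dist y z \<le> dist x y"
  obtains c where "\<forall>p\<in>{x, y, z}. 3 * (dist c p)\<^sup>2 \<le> (dist x y)\<^sup>2"
proof (cases "inner (x - z) (y - z) \<le> 0")
  case True
  have "3 * (dist (midpoint x y) p)\<^sup>2 \<le> (dist x y)\<^sup>2" if "p \<in> {x, y, z}" for p
  proof -
    have "dist (midpoint x y) p \<le> dist x y / 2"
      using that dist_midpoint_le_if_obtuse[OF True] by (auto simp: dist_midpoint dist_commute)
    then have "(dist (midpoint x y) p)\<^sup>2 \<le> (dist x y)\<^sup>2 / 4"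
      using power_mono[of _ "dist x y / 2" 2] by (simp add: power_divide)
    then show ?thesis
      using zero_le_power2[of "dist (midpoint x y) p"] by linarith
  qed
  then show ?thesis
    using that by blast
next
  case False
  have "norm (x - z) \<le> dist (x - z) (y - z)" "norm (y - z) \<le> dist (x - z) (y - z)"
    using assms by (simp_all add: dist_norm)
  then obtain c where c: "dist c (x - z) = norm c" "dist c (y - z) = norm c"
    "3 * (norm c)\<^sup>2 \<le> (dist (x - z) (y - z))\<^sup>2"
    using acute_triangle_circumradius_le[of "x - z" "y - z"] False by auto
  have "dist (z + c) x = norm c" "dist (z + c) y = norm c" "dist (z + c) z = norm c"
    using c(1,2) by (simp_all add: dist_norm algebra_simps)
  then have "\<forall>p\<in>{x, y, z}. 3 * (dist (z + c) p)\<^sup>2 \<le> (dist x y)\<^sup>2"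
    using c(3) by (simp add: dist_norm)
  then show ?thesis
    using that by blast
qed

lemma three_points_in_cball:
  fixes x y z :: complex
  assumes "dist x y \<le> 1" "dist y z \<le> 1" "dist x z \<le> 1"
  obtains c where "{x, y, z} \<subseteq> cball c (sqrt (1/3))"
proof -
  have longest: "\<exists>c. {a, b, e} \<subseteq> cball c (sqrt (1/3))"
    if ab: "dist a e \<le> dist a b" "dist b e \<le> dist a b" "dist a b \<le> 1" for a b e :: complex
  proof -
    obtain c where c: "\<forall>p\<in>{a, b, e}. 3 * (dist c p)\<^sup>2 \<le> (dist a b)\<^sup>2"
      using triangle_in_cball_longest_side[OF ab(1,2)] by blast
    have "(dist a b)\<^sup>2 \<le> 1"
      using ab(3) by (simp add: power_le_one)
    then have "dist c p \<le> sqrt (1/3)" if "p \<in> {a, b, e}" for p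
      using c that by (intro real_le_rsqrt) fastforce
    then show ?thesis
      by (intro exI[of _ c]) auto
  qed
  consider "dist x z \<le> dist x y" "dist y z \<le> dist x y"
    | "dist x y \<le> dist x z" "dist y z \<le> dist x z"
    | "dist x y \<le> dist y z" "dist x z \<le> dist y z"
    by linarith
  then have "\<exists>c. {x, y, z} \<subseteq> cball c (sqrt (1/3))"
  proof cases
    case 1
    then show ?thesis using longest[of x z y] assms by auto
  next
    case 2
    then show ?thesis using longest[of x y z] assms by (auto simp: dist_commute insert_commute)
  next
    case 3
    then show ?thesis using longest[of y x z] assms by (auto simp: dist_commute insert_commute)
  qed
  then show ?thesis
    using that by blast
qed

lemma jung_plane:
  fixes P :: "complex set"
  assumes P: "finite P" "3 \<le> card P" and diam: "\<forall>p\<in>P. \<forall>q\<in>P. dist p q \<le> 1"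
  obtains c where "P \<subseteq> cball c (sqrt (1/3))"
proof -
  define r where "r = sqrt (1/3 :: real)"
  define F where "F = (\<lambda>p. cball p r) ` P"
  have "inj_on (\<lambda>p. cball p r) P"
    unfolding r_def by (auto simp: inj_on_def cball_eq_cball_iff)
  then have "card F = card P"
    unfolding F_def by (rule card_image)
  have "\<Inter>F \<noteq> {}"
  proof (rule Helly)
    show "DIM(complex) + 1 \<le> card F"
      using \<open>card F = card P\<close> P(2) by simp
    show "\<forall>s\<in>F. convex s"
      unfolding F_def by simp
    fix t assume t: "t \<subseteq> F" "card t = DIM(complex) + 1"
    then obtain A B C where ABC: "t = {A, B, C}"
      by (auto simp: card_3_iff)
    then have "A \<in> F" "B \<in> F" "C \<in> F"
      using t(1) by auto
    then obtain a b e where "a \<in> P" "b \<in> P" "e \<in> P" "t = {cball a r, cball b r, cball e r}"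
      unfolding F_def ABC by blast
    moreover obtain c where "{a, b, e} \<subseteq> cball c r"
      using three_points_in_cball[of a b e] diam calculation unfolding r_def by blast
    ultimately have "c \<in> \<Inter>t"
      by (simp add: dist_commute)
    then show "\<Inter>t \<noteq> {}"
      by blast
  qed
  then obtain c where "c \<in> \<Inter>F"
    by blast
  then have "P \<subseteq> cball c r"
    unfolding F_def by (auto simp: dist_commute)
  then show ?thesis
    using that unfolding r_def by blast
qed

lemma half_disc_with_third_of_points:
  fixes P :: "complex set"
  assumes P: "finite P" "card P = 3 * k" "1 \<le> k" and diam: "\<forall>p\<in>P. \<forall>q\<in>P. dist p q \<le> 1"
  shows "\<exists>c. k \<le> card (P \<inter> cball c (1/2))"
proof -
  obtain c where "P \<subseteq> cball c (sqrt (1/3))"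
    using jung_plane[OF P(1) _ diam] P(2,3) by auto
  moreover have "3 * (sqrt (1/3))\<^sup>2 \<le> (1::real)"
    by simp
  then obtain c1 c2 c3 where
    "cball c (sqrt (1/3)) \<subseteq> cball c1 (1/2) \<union> cball c2 (1/2) \<union> cball c3 (1/2)"
    by (rule cball_covered_by_three_half_discs) blast
  ultimately have "P = (P \<inter> cball c1 (1/2)) \<union> (P \<inter> cball c2 (1/2)) \<union> (P \<inter> cball c3 (1/2))"
    by blast
  then have "card P \<le> card (P \<inter> cball c1 (1/2)) + card (P \<inter> cball c2 (1/2)) + card (P \<inter> cball c3 (1/2))"
    by (metis card_Un_le add_right_mono order_trans)
  then have "k \<le> card (P \<inter> cball c1 (1/2)) \<or> k \<le> card (P \<inter> cball c2 (1/2)) \<or>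
      k \<le> card (P \<inter> cball c3 (1/2))"
    using P(2) by linarith
  then show ?thesis
    by blast
qed

lemma N_between:
  assumes lower: "\<forall>P\<in>point_sets m. \<exists>c. k \<le> card (P \<inter> cball c r)"
    and upper: "P\<^sub>0 \<in> point_sets m" "\<forall>c. card (P\<^sub>0 \<inter> cball c r) \<le> K"
  shows "k \<le> N m r \<and> N m r \<le> K"
proof -
  let ?Q = "\<lambda>j. \<forall>P\<in>point_sets m. \<exists>c. j \<le> card (P \<inter> cball c r)"
  have bounded: "j \<le> K" if "?Q j" for j
    using that upper le_trans by blast
  have "k \<le> Greatest ?Q"
    using Greatest_le_nat[of ?Q k K] lower bounded by blast
  moreover have "Greatest ?Q \<le> K"
    using GreatestI_nat[of ?Q k K] lower bounded by blast
  ultimately show ?thesis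
    unfolding N_def by simp
qed

theorem theorem3:
  fixes n :: nat
  assumes "n \<ge> 1"
  shows "n \<le> N (3 * n) (1 / 2) \<and> N (3 * n) (1 / 2) \<le> n + 1"
proof -
  obtain P\<^sub>0 :: "complex set" where P\<^sub>0: "sparse_configuration n P\<^sub>0"
    using sparse_configuration_exists assms by blast
  have "P\<^sub>0 \<in> point_sets (3 * n)" "\<forall>c. card (P\<^sub>0 \<inter> cball c (1/2)) \<le> n + 1"
    using P\<^sub>0 unfolding sparse_configuration_def point_sets_def by auto
  moreover have "\<forall>P\<in>point_sets (3 * n). \<exists>c. n \<le> card (P \<inter> cball c (1/2))"
    using half_disc_with_third_of_points assms unfolding point_sets_def by blast
  ultimately show ?thesis
    by (intro N_between) auto
qed

end
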